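(* For all complex $y$, $$\sum_{n=0}^{\infty}\frac{C_n}{2^n}R_n(y)=e^{y}\left(1-I_0(y)+\sum_{n=0}^{\infty}\frac{y^{2n+1}}{4^n(n!)^2(2n+1)}\right)=e^{y}\left(1+(y-1)I_0(y)+\frac{\pi y}{2}\big[I_0(y)\mathbf{L}_1(y)-I_1(y)\mathbf{L}_0(y)\big]\right).$$
   Context: For an integer $n\ge 0$ and complex $y$, $R_n(y)=e^y-1-\frac{y}{1!}-\frac{y^2}{2!}-\dots-\frac{y^n}{n!}=e^y-\sum_{k=0}^n\frac{y^k}{k!}$. $C_n=\frac{1}{n+1}\binom{2n}{n}$ are the Catalan numbers. $I_0(z)=\sum_{n\ge0}\frac{z^{2n}}{4^n(n!)^2}$ and $I_1=I_0'$ are the modified Bessel functions of the first kind; $\mathbf{L}_0,\mathbf{L}_1$ are the modified Struve functions of orders $0$ and $1$. *)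

theory Defs
  imports "HOL-Analysis.Analysis"
begin

definition expRem :: "nat \<Rightarrow> complex \<Rightarrow> complex" where
  "expRem n y = exp y - (\<Sum>k\<le>n. y ^ k / of_nat (fact k))"

definition catalan :: "nat \<Rightarrow> nat" where
  "catalan n = ((2 * n) choose n) div (n + 1)"

definition besselI0 :: "complex \<Rightarrow> complex" where
  "besselI0 z = (\<Sum>n. z ^ (2 * n) / (4 ^ n * (of_nat (fact n))\<^sup>2))"

definition besselI1 :: "complex \<Rightarrow> complex" where
  "besselI1 z = (\<Sum>n. (z / 2) ^ (2 * n + 1) / (of_nat (fact n) * of_nat (fact (n + 1))))"

definition struveL0 :: "complex \<Rightarrow> complex" where
  "struveL0 z = (\<Sum>k. (z / 2) ^ (2 * k + 1) /
      (complex_of_real (Gamma (real k + 3 / 2)) * complex_of_real (Gamma (real k + 3 / 2))))"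

definition struveL1 :: "complex \<Rightarrow> complex" where
  "struveL1 z = (\<Sum>k. (z / 2) ^ (2 * k + 2) /
      (complex_of_real (Gamma (real k + 3 / 2)) * complex_of_real (Gamma (real k + 5 / 2))))"

end

theory Submission
  imports Defs
begin

text \<open>
  Let c n = C n / 2^n and a k = c 0 + ... + c (k - 1). Summation by parts turns
  \<Sum> c n R n (y) into \<Sum> a k y^k / k!, the value at y of the exponential generating function A
  of the a k, and A' = A + P for the exponential generating function P of the c n.
  The recurrence (n + 2) C (n + 1) = 2 (2 n + 1) C n is the coefficient form of the differential
  equation x P'' + 2 P' = 2 x P' + P, which e^x (I0 - I1) satisfies as well; hence
  P = e^x (I0 - I1) and A = e^x (1 - I0 + S), where S is the antiderivative of I0 vanishing at 0.
  Finally S = x I0 + (pi x / 2) (I0 L1 - I1 L0), as both sides have derivative I0 by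
  I0' = I1, x I1' = x I0 - I1, L0' = L1 + 2 / pi and x L1' = x L0 - L1. These identities are
  proved for formal power series, which are all entire and can thus be evaluated at any y.
\<close>

section \<open>Catalan numbers\<close>

lemma catalan_times_Suc: "catalan n * Suc n = (2 * n) choose n"
proof -
  have "Suc n dvd (2 * n) choose n"
  proof (cases n)
    case (Suc m)
    have "Suc n * (2 * n choose Suc n) = n * (2 * n choose n)"
      using Suc_times_binomial_add[of n m] Suc by (simp add: mult_2)
    then have "(2 * n) choose n = Suc n * ((2 * n choose n) - (2 * n choose Suc n))"
      by (simp add: diff_mult_distrib2)
    then show ?thesis by (metis dvd_triv_left)
  qed simp
  from dvd_div_mult_self[OF this] show ?thesis by (simp add: catalan_def)
qed

lemma central_binomial_Suc: "Suc n * (2 * Suc n choose Suc n) = 2 * (2 * n + 1) * (2 * n choose n)"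
proof -
  have "Suc n * (2 * Suc n choose Suc n) = Suc (Suc (2 * n)) * (Suc (2 * n) choose n)"
    using Suc_times_binomial[of n "Suc (2 * n)"] by simp
  also have "(Suc (2 * n) choose n) = (Suc (2 * n) choose Suc n)"
    using binomial_symmetric[of n "Suc (2 * n)"] by simp
  also have "Suc (Suc (2 * n)) * \<dots> = 2 * ((Suc (2 * n) choose Suc n) * Suc n)"
    by simp
  also have "\<dots> = 2 * (Suc (2 * n) * (2 * n choose n))"
    using Suc_times_binomial_eq[of "2 * n" n] by simp
  finally show ?thesis by simp
qed

lemma catalan_Suc: "catalan (Suc n) * (n + 2) = 2 * (2 * n + 1) * catalan n"
proof -
  have "Suc n * (catalan (Suc n) * (n + 2)) = Suc n * (2 * Suc n choose Suc n)"
    using catalan_times_Suc[of "Suc n"] by simp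
  also have "\<dots> = 2 * (2 * n + 1) * (catalan n * Suc n)"
    by (simp only: central_binomial_Suc catalan_times_Suc)
  also have "\<dots> = Suc n * (2 * (2 * n + 1) * catalan n)"
    by (simp only: ac_simps)
  finally show ?thesis by (subst (asm) mult_left_cancel) simp_all
qed

lemma catalan_le_four_power: "catalan n \<le> 4 ^ n"
proof -
  have "catalan n \<le> (2 * n) choose n" by (simp add: catalan_def)
  also have "\<dots> \<le> 2 ^ (2 * n)" by (rule binomial_le_pow2)
  finally show ?thesis by (simp add: power_mult)
qed


section \<open>Bessel and Struve power series\<close>

definition bessel_I0_coeff :: "nat \<Rightarrow> complex" where
  "bessel_I0_coeff k = 1 / (4 ^ k * (of_nat (fact k))\<^sup>2)"

definition bessel_I0_fps :: "complex fps" where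
  "bessel_I0_fps = Abs_fps (\<lambda>n. if even n then bessel_I0_coeff (n div 2) else 0)"

definition bessel_I1_fps :: "complex fps" where
  "bessel_I1_fps = Abs_fps (\<lambda>n. if odd n
     then 1 / (2 ^ n * of_nat (fact (n div 2)) * of_nat (fact (Suc (n div 2)))) else 0)"

definition bessel_I0_integral_fps :: "complex fps" where
  "bessel_I0_integral_fps = Abs_fps (\<lambda>n. if odd n then bessel_I0_coeff (n div 2) / of_nat n else 0)"

text \<open>The series of pi L0 and pi L1: the factor pi makes the coefficients rational.\<close>

definition pi_struve_L0_fps :: "complex fps" where
  "pi_struve_L0_fps = Abs_fps (\<lambda>n. if odd n
     then 2 ^ n * (of_nat (fact (n div 2)))\<^sup>2 / (of_nat (fact n))\<^sup>2 else 0)"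

definition pi_struve_L1_fps :: "complex fps" where
  "pi_struve_L1_fps = Abs_fps (\<lambda>n. if even n \<and> n \<noteq> 0
     then 4 ^ (n div 2) * of_nat (fact (n div 2 - 1)) * of_nat (fact (n div 2))
          / (of_nat (fact (n - 1)) * of_nat (fact (n + 1))) else 0)"

lemma four_power_complex: "(4 :: complex) ^ k = 2 ^ k * 2 ^ k"
  by (simp add: power_mult_distrib[symmetric])

lemma parity_cases: fixes n :: nat obtains k where "n = 2 * k" | k where "n = 2 * k + 1"
  by (metis oddE evenE)

lemma fps_deriv_bessel_I0: "fps_deriv bessel_I0_fps = bessel_I1_fps"
proof (rule fps_ext)
  fix n show "fps_nth (fps_deriv bessel_I0_fps) n = fps_nth bessel_I1_fps n"
  proof (cases n rule: parity_cases)
    case (2 k)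
    have "Suc (Suc (2 * k)) div 2 = Suc k" by simp
    then show ?thesis using 2
      by (simp add: bessel_I0_fps_def bessel_I1_fps_def bessel_I0_coeff_def field_simps
          del: of_nat_Suc of_nat_add of_nat_mult fact_Suc)
        (simp add: fact_Suc power_mult four_power_complex algebra_simps power2_eq_square)
  qed (simp add: bessel_I0_fps_def bessel_I1_fps_def)
qed

lemma bessel_I1_ode: "fps_X * fps_deriv bessel_I1_fps = fps_X * bessel_I0_fps - bessel_I1_fps"
proof (rule fps_ext)
  fix n
  show "fps_nth (fps_X * fps_deriv bessel_I1_fps) n = fps_nth (fps_X * bessel_I0_fps - bessel_I1_fps) n"
  proof (cases n rule: parity_cases)
    case (2 k)
    have "Suc (2 * k) div 2 = k" by simp
    then show ?thesis using 2
      by (simp add: bessel_I0_fps_def bessel_I1_fps_def bessel_I0_coeff_def field_simps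
          del: of_nat_Suc of_nat_add of_nat_mult fact_Suc)
        (simp add: fact_Suc power_mult four_power_complex algebra_simps power2_eq_square)
  qed (simp add: bessel_I0_fps_def bessel_I1_fps_def)
qed

lemma fps_deriv_bessel_I0_integral: "fps_deriv bessel_I0_integral_fps = bessel_I0_fps"
  by (rule fps_ext) (auto simp: bessel_I0_integral_fps_def bessel_I0_fps_def elim: parity_cases
      simp del: of_nat_Suc of_nat_add of_nat_mult)

lemma fps_deriv_pi_struve_L0: "fps_deriv pi_struve_L0_fps = pi_struve_L1_fps + 2"
proof (rule fps_ext)
  fix n show "fps_nth (fps_deriv pi_struve_L0_fps) n = fps_nth (pi_struve_L1_fps + 2) n"
  proof (cases n rule: parity_cases)
    case (1 k)
    show ?thesis
    proof (cases k)
      case (Suc j)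
      have "Suc (Suc (Suc (2 * j))) div 2 = Suc j" by simp
      then show ?thesis using 1 Suc
        by (simp add: pi_struve_L0_fps_def pi_struve_L1_fps_def fps_numeral_nth field_simps
            del: of_nat_Suc of_nat_add of_nat_mult fact_Suc)
          (simp add: fact_Suc power_mult four_power_complex algebra_simps power2_eq_square)
    qed (simp add: 1 pi_struve_L0_fps_def pi_struve_L1_fps_def fps_numeral_nth)
  qed (simp add: pi_struve_L0_fps_def pi_struve_L1_fps_def fps_numeral_nth)
qed

lemma pi_struve_L1_ode: "fps_X * fps_deriv pi_struve_L1_fps = fps_X * pi_struve_L0_fps - pi_struve_L1_fps"
proof (rule fps_ext)
  fix n
  show "fps_nth (fps_X * fps_deriv pi_struve_L1_fps) n
      = fps_nth (fps_X * pi_struve_L0_fps - pi_struve_L1_fps) n"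
  proof (cases n rule: parity_cases)
    case (1 k)
    show ?thesis
    proof (cases k)
      case (Suc j)
      have "Suc (Suc (2 * j)) div 2 = Suc j" "Suc (2 * j) div 2 = j" by simp_all
      then show ?thesis using 1 Suc
        by (simp add: pi_struve_L0_fps_def pi_struve_L1_fps_def field_simps
            del: of_nat_Suc of_nat_add of_nat_mult fact_Suc)
          (simp add: fact_Suc power_mult four_power_complex algebra_simps power2_eq_square)
    qed (simp add: 1 pi_struve_L0_fps_def pi_struve_L1_fps_def)
  qed (simp add: pi_struve_L0_fps_def pi_struve_L1_fps_def)
qed


section \<open>Generating functions of the Catalan weights\<close>

lemma fps_nth_Suc_if_ode:
  fixes f :: "'a :: comm_ring_1 fps"
  assumes "fps_X * fps_deriv (fps_deriv f) + 2 * fps_deriv f = 2 * fps_X * fps_deriv f + f"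
  shows "of_nat ((n + 1) * (n + 2)) * fps_nth f (Suc n) = of_nat (2 * n + 1) * fps_nth f n"
proof -
  have "fps_nth (fps_X * fps_deriv (fps_deriv f) + 2 * fps_deriv f) n
      = fps_nth (2 * fps_X * fps_deriv f + f) n"
    by (simp only: assms)
  then show ?thesis
    by (cases n) (simp_all add: numeral_fps_const algebra_simps)
qed

lemma exp_times_bessel_ode:
  defines "P \<equiv> fps_exp 1 * (bessel_I0_fps - bessel_I1_fps)"
  shows "fps_X * fps_deriv (fps_deriv P) + 2 * fps_deriv P = 2 * fps_X * fps_deriv P + P"
proof -
  have I1: "fps_X * fps_deriv bessel_I1_fps = fps_X * bessel_I0_fps - bessel_I1_fps"
    by (rule bessel_I1_ode)
  then have "fps_deriv (fps_X * fps_deriv bessel_I1_fps) = fps_deriv (fps_X * bessel_I0_fps - bessel_I1_fps)"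
    by (rule arg_cong)
  then have I1': "fps_deriv bessel_I1_fps + fps_X * fps_deriv (fps_deriv bessel_I1_fps)
      = bessel_I0_fps + fps_X * bessel_I1_fps - fps_deriv bessel_I1_fps"
    by (simp add: fps_deriv_bessel_I0)
  show ?thesis
    unfolding P_def using I1 I1' by (simp add: fps_deriv_bessel_I0 algebra_simps) algebra
qed

definition catalan_egf :: "complex fps" where
  "catalan_egf = Abs_fps (\<lambda>n. of_nat (catalan n) / 2 ^ n / fact n)"

lemma catalan_egf_recurrence:
  "of_nat ((n + 1) * (n + 2)) * fps_nth catalan_egf (Suc n) = of_nat (2 * n + 1) * fps_nth catalan_egf n"
proof -
  have "(of_nat (catalan (Suc n) * (n + 2)) :: complex) = of_nat (2 * (2 * n + 1) * catalan n)"
    by (simp only: catalan_Suc)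
  then have c: "(of_nat (catalan (Suc n)) :: complex) * (of_nat n + 2)
      = 2 * (2 * of_nat n + 1) * of_nat (catalan n)"
    by (simp only: of_nat_mult of_nat_add of_nat_numeral of_nat_1)
  have "of_nat ((n + 1) * (n + 2)) * fps_nth catalan_egf (Suc n)
      = of_nat (catalan (Suc n)) * (of_nat n + 2) / (2 * 2 ^ n * fact n)"
    by (simp add: catalan_egf_def field_simps del: of_nat_Suc fact_Suc) (simp add: fact_Suc algebra_simps)
  also have "\<dots> = 2 * (2 * of_nat n + 1) * of_nat (catalan n) / (2 * 2 ^ n * fact n)"
    by (simp only: c)
  also have "\<dots> = of_nat (2 * n + 1) * fps_nth catalan_egf n"
    by (simp add: catalan_egf_def field_simps)
  finally show ?thesis .
qed

lemma catalan_egf_eq: "catalan_egf = fps_exp 1 * (bessel_I0_fps - bessel_I1_fps)"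
proof (rule fps_ext)
  show "fps_nth catalan_egf n = fps_nth (fps_exp 1 * (bessel_I0_fps - bessel_I1_fps)) n" for n
  proof (induction n)
    case 0
    show ?case
      by (simp add: catalan_egf_def catalan_def bessel_I0_fps_def bessel_I1_fps_def bessel_I0_coeff_def)
  next
    case (Suc n)
    have "(of_nat ((n + 1) * (n + 2)) :: complex) \<noteq> 0"
      by (simp only: of_nat_eq_0_iff) simp
    then show ?case
      using catalan_egf_recurrence[of n] fps_nth_Suc_if_ode[OF exp_times_bessel_ode, of n] Suc.IH
      by (metis mult_cancel_left)
  qed
qed

definition catalan_partial_egf :: "complex fps" where
  "catalan_partial_egf = Abs_fps (\<lambda>k. (\<Sum>n<k. of_nat (catalan n) / 2 ^ n) / fact k)"

lemma fps_deriv_catalan_partial_egf: "fps_deriv catalan_partial_egf = catalan_partial_egf + catalan_egf"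
  by (rule fps_ext) (simp add: catalan_partial_egf_def catalan_egf_def field_simps del: of_nat_Suc)

lemma catalan_partial_egf_eq:
  "catalan_partial_egf = fps_exp 1 * (1 - bessel_I0_fps + bessel_I0_integral_fps)"
proof -
  define D where "D = catalan_partial_egf - fps_exp 1 * (1 - bessel_I0_fps + bessel_I0_integral_fps)"
  have "fps_deriv D = fps_const 1 * D"
    by (simp add: D_def fps_deriv_catalan_partial_egf catalan_egf_eq fps_deriv_bessel_I0
        fps_deriv_bessel_I0_integral algebra_simps)
  then have "D = fps_const (fps_nth D 0) * fps_exp 1"
    by (simp only: fps_exp_unique_ODE)
  also have "fps_nth D 0 = 0"
    by (simp add: D_def catalan_partial_egf_def bessel_I0_fps_def bessel_I0_integral_fps_def
        bessel_I0_coeff_def)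
  finally show ?thesis by (simp add: D_def)
qed

lemma bessel_I0_integral_eq_struve:
  "bessel_I0_integral_fps = fps_X * bessel_I0_fps
     + fps_const (1/2) * (fps_X * (bessel_I0_fps * pi_struve_L1_fps - bessel_I1_fps * pi_struve_L0_fps))"
  (is "_ = ?T")
proof -
  have "fps_deriv ?T = bessel_I0_fps"
    using bessel_I1_ode pi_struve_L1_ode
    by (simp add: fps_deriv_bessel_I0 fps_deriv_pi_struve_L0 fps_const_mult[symmetric] numeral_fps_const
        algebra_simps) algebra
  then have "fps_deriv bessel_I0_integral_fps = fps_deriv ?T"
    by (simp only: fps_deriv_bessel_I0_integral)
  then have "bessel_I0_integral_fps = fps_const (fps_nth bessel_I0_integral_fps 0 - fps_nth ?T 0) + ?T"
    by (rule fps_deriv_eq_iff[THEN iffD1])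
  then show ?thesis by (simp add: bessel_I0_integral_fps_def)
qed


section \<open>Evaluation of the entire series\<close>

lemma fps_conv_radius_eq_infinity_if_bound:
  fixes f :: "'a :: {banach, real_normed_div_algebra} fps"
  assumes "\<And>n. norm (fps_nth f n) \<le> B ^ n / fact n"
  shows "fps_conv_radius f = \<infinity>"
  unfolding fps_conv_radius_def
proof (rule conv_radius_inftyI'')
  fix z :: 'a
  have bound: "norm (fps_nth f n * z ^ n) \<le> inverse (fact n) * (B * norm z) ^ n" for n
  proof -
    have "norm (fps_nth f n) * norm z ^ n \<le> B ^ n / fact n * norm z ^ n"
      by (rule mult_right_mono[OF assms]) simp
    then have "norm (fps_nth f n * z ^ n) \<le> B ^ n / fact n * norm z ^ n"
      by (simp add: norm_mult norm_power)
    then show ?thesis by (simp add: power_mult_distrib field_simps)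
  qed
  show "summable (\<lambda>n. fps_nth f n * z ^ n)"
    by (rule summable_norm_cancel, rule summable_comparison_test'[OF summable_exp[of "B * norm z"]])
      (simp add: bound)
qed

lemma fps_conv_radius_deriv_eq_infinity:
  fixes f :: "'a :: {banach, real_normed_field} fps"
  shows "fps_conv_radius f = \<infinity> \<Longrightarrow> fps_conv_radius (fps_deriv f) = \<infinity>"
  using fps_conv_radius_deriv[of f] by simp

lemma fps_conv_radius_add_eq_infinity [simp]:
  "fps_conv_radius f = \<infinity> \<Longrightarrow> fps_conv_radius g = \<infinity> \<Longrightarrow> fps_conv_radius (f + g) = \<infinity>"
  using fps_conv_radius_add[of f g] by simp

lemma fps_conv_radius_diff_eq_infinity [simp]:
  "fps_conv_radius f = \<infinity> \<Longrightarrow> fps_conv_radius g = \<infinity> \<Longrightarrow> fps_conv_radius (f - g) = \<infinity>"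
  using fps_conv_radius_diff[of f g] by simp

lemma fps_conv_radius_mult_eq_infinity [simp]:
  "fps_conv_radius f = \<infinity> \<Longrightarrow> fps_conv_radius g = \<infinity> \<Longrightarrow> fps_conv_radius (f * g) = \<infinity>"
  using fps_conv_radius_mult[of f g] by simp

lemma fact_le_two_power_mult_fact:
  assumes "k \<le> n" shows "fact n \<le> (2 ^ n * (fact k * fact (n - k)) :: real)"
proof -
  have "real (fact n) = real (fact k * fact (n - k) * (n choose k))"
    by (simp only: binomial_fact_lemma[OF assms])
  then have "fact n = fact k * fact (n - k) * real (n choose k)"
    by (simp only: of_nat_mult of_nat_fact)
  also have "\<dots> \<le> fact k * fact (n - k) * 2 ^ n"
    using of_nat_mono[OF binomial_le_pow2[of n k], where 'a=real] by (intro mult_left_mono) simp_all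
  finally show ?thesis by (simp add: mult.commute)
qed

lemma fact_mult_fact_le_fact:
  assumes "k \<le> n" shows "fact k * fact (n - k) \<le> (fact n :: real)"
proof -
  have "real (fact n) = real (fact k * fact (n - k) * (n choose k))"
    by (simp only: binomial_fact_lemma[OF assms])
  then have "fact n = fact k * fact (n - k) * real (n choose k)"
    by (simp only: of_nat_mult of_nat_fact)
  moreover have "1 \<le> real (n choose k)" using assms by (simp add: Suc_leI)
  ultimately show ?thesis
    using mult_left_mono[of 1 "real (n choose k)" "fact k * fact (n - k)"] by simp
qed

lemma fps_conv_radius_bessel_I0_integral [simp]: "fps_conv_radius bessel_I0_integral_fps = \<infinity>"
proof (rule fps_conv_radius_eq_infinity_if_bound)
  fix n
  show "norm (fps_nth bessel_I0_integral_fps n) \<le> 1 ^ n / fact n"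
  proof (cases n rule: parity_cases)
    case (2 k)
    have "fact (2 * k) \<le> (4 ^ k * (fact k)\<^sup>2 :: real)"
      using fact_le_two_power_mult_fact[of k "2 * k"] by (simp add: power_mult power2_eq_square)
    then have "norm (fps_nth bessel_I0_integral_fps n) \<le> 1 / (fact (2 * k) * real (Suc (2 * k)))"
      using 2 by (simp add: bessel_I0_integral_fps_def bessel_I0_coeff_def norm_divide norm_mult
          norm_power frac_le del: of_nat_Suc)
    also have "\<dots> = 1 ^ n / fact n" using 2 by (simp add: algebra_simps)
    finally show ?thesis .
  qed (simp add: bessel_I0_integral_fps_def)
qed

lemma fps_conv_radius_pi_struve_L0 [simp]: "fps_conv_radius pi_struve_L0_fps = \<infinity>"
proof (rule fps_conv_radius_eq_infinity_if_bound)
  fix n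
  show "norm (fps_nth pi_struve_L0_fps n) \<le> 2 ^ n / fact n"
  proof (cases n rule: parity_cases)
    case (2 k)
    have "(fact k)\<^sup>2 \<le> (fact (Suc k) * fact k :: real)"
      by (simp add: power2_eq_square mult_right_mono fact_mono)
    also have "\<dots> \<le> fact n"
      using fact_mult_fact_le_fact[of "Suc k" n] 2 by simp
    finally have "2 ^ n * (fact k)\<^sup>2 / (fact n)\<^sup>2 \<le> (2 ^ n * fact n / (fact n)\<^sup>2 :: real)"
      by (intro divide_right_mono mult_left_mono) simp_all
    then show ?thesis
      using 2 by (simp add: pi_struve_L0_fps_def norm_divide norm_mult norm_power power2_eq_square
          del: fact_Suc)
  qed (simp add: pi_struve_L0_fps_def)
qed

lemma fps_conv_radius_bessel_I0 [simp]: "fps_conv_radius bessel_I0_fps = \<infinity>"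
  using fps_conv_radius_deriv_eq_infinity[of bessel_I0_integral_fps]
  by (simp add: fps_deriv_bessel_I0_integral)

lemma fps_conv_radius_bessel_I1 [simp]: "fps_conv_radius bessel_I1_fps = \<infinity>"
  using fps_conv_radius_deriv_eq_infinity[of bessel_I0_fps] by (simp add: fps_deriv_bessel_I0)

lemma fps_conv_radius_pi_struve_L1 [simp]: "fps_conv_radius pi_struve_L1_fps = \<infinity>"
proof -
  have "fps_conv_radius (fps_deriv pi_struve_L0_fps - 2) = \<infinity>"
    using fps_conv_radius_deriv_eq_infinity[of pi_struve_L0_fps] by simp
  then show ?thesis by (simp add: fps_deriv_pi_struve_L0)
qed

lemma sums_eval_fps_reindex:
  fixes f :: "'a :: {banach, real_normed_div_algebra} fps"
  assumes "strict_mono g" "\<And>n. n \<notin> range g \<Longrightarrow> fps_nth f n = 0" "norm z < fps_conv_radius f"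
  shows "(\<lambda>k. fps_nth f (g k) * z ^ g k) sums eval_fps f z"
  using sums_mono_reindex[of g "\<lambda>n. fps_nth f n * z ^ n"] sums_eval_fps[OF assms(3)] assms(1,2)
  by simp

lemma range_double: "range (\<lambda>k::nat. 2 * k) = {n. even n}"
  by (auto elim: evenE)

lemma range_Suc_double: "range (\<lambda>k::nat. Suc (2 * k)) = {n. odd n}"
  by (auto elim: oddE)

lemma range_Suc_Suc_double: "range (\<lambda>k::nat. Suc (Suc (2 * k))) = {n. even n \<and> n \<noteq> 0}"
proof -
  have "n \<in> range (\<lambda>k. Suc (Suc (2 * k)))" if "even n" "n \<noteq> 0" for n :: nat
  proof -
    from \<open>even n\<close> obtain m where "n = 2 * m" by (rule evenE)
    with \<open>n \<noteq> 0\<close> obtain j where "n = 2 * j + 2" by (cases m) auto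
    then show ?thesis using rangeI[of "\<lambda>k. Suc (Suc (2 * k))" j] by simp
  qed
  then show ?thesis by auto
qed

lemma eval_bessel_I0_fps: "eval_fps bessel_I0_fps y = besselI0 y"
proof -
  have "(\<lambda>k. fps_nth bessel_I0_fps (2 * k) * y ^ (2 * k)) sums eval_fps bessel_I0_fps y"
    using fps_conv_radius_bessel_I0
    by (intro sums_eval_fps_reindex) (auto simp: strict_mono_def bessel_I0_fps_def range_double)
  then show ?thesis
    by (simp add: besselI0_def bessel_I0_fps_def bessel_I0_coeff_def sums_iff)
qed

lemma eval_bessel_I1_fps: "eval_fps bessel_I1_fps y = besselI1 y"
proof -
  have "(\<lambda>k. fps_nth bessel_I1_fps (2 * k + 1) * y ^ (2 * k + 1)) sums eval_fps bessel_I1_fps y"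
    using fps_conv_radius_bessel_I1
    by (intro sums_eval_fps_reindex)
      (auto simp: strict_mono_def bessel_I1_fps_def range_Suc_double)
  then show ?thesis
    by (simp add: besselI1_def bessel_I1_fps_def power_divide sums_iff mult.assoc del: fact_Suc)
qed

lemma sums_eval_bessel_I0_integral_fps:
  "(\<lambda>n. y ^ (2 * n + 1) / (4 ^ n * (of_nat (fact n))\<^sup>2 * of_nat (2 * n + 1)))
     sums eval_fps bessel_I0_integral_fps y"
proof -
  have "(\<lambda>k. fps_nth bessel_I0_integral_fps (2 * k + 1) * y ^ (2 * k + 1))
      sums eval_fps bessel_I0_integral_fps y"
    using fps_conv_radius_bessel_I0_integral
    by (intro sums_eval_fps_reindex)
      (auto simp: strict_mono_def bessel_I0_integral_fps_def range_Suc_double)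
  then show ?thesis
    by (simp add: bessel_I0_integral_fps_def bessel_I0_coeff_def del: of_nat_add of_nat_mult of_nat_Suc)
qed

lemma Gamma_nat_plus_three_halves:
  "Gamma (real k + 3 / 2) = sqrt pi * fact (2 * k + 1) / (2 ^ (2 * k + 1) * fact k)"
proof (induction k)
  case 0
  have "Gamma (1 / 2 + 1) = 1 / 2 * Gamma (1 / 2 :: real)"
    by (rule Gamma_plus1) (use nonpos_Ints_nonpos in fastforce)
  then show ?case by (simp add: Gamma_one_half_real)
next
  case (Suc k)
  have "Gamma (real k + 3 / 2 + 1) = (real k + 3 / 2) * Gamma (real k + 3 / 2)"
    by (rule Gamma_plus1) (use nonpos_Ints_nonpos in fastforce)
  also have "\<dots> = (real k + 3 / 2) * (sqrt pi * fact (2 * k + 1) / (2 ^ (2 * k + 1) * fact k))"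
    by (simp only: Suc.IH)
  also have "\<dots> = sqrt pi * fact (2 * Suc k + 1) / (2 ^ (2 * Suc k + 1) * fact (Suc k))"
    by (simp add: field_simps del: of_nat_Suc) (simp add: algebra_simps)
  finally show ?case by (simp add: add.commute)
qed

lemma Gamma_nat_plus_three_halves_mult:
  "complex_of_real (Gamma (real j + 3 / 2)) * complex_of_real (Gamma (real k + 3 / 2))
     = of_real pi * fact (2 * j + 1) * fact (2 * k + 1)
       / (2 ^ (2 * j + 1) * fact j * (2 ^ (2 * k + 1) * fact k))"
proof -
  have "Gamma (real j + 3 / 2) * Gamma (real k + 3 / 2)
      = pi * fact (2 * j + 1) * fact (2 * k + 1)
        / (2 ^ (2 * j + 1) * fact j * (2 ^ (2 * k + 1) * fact k))"
    by (simp add: Gamma_nat_plus_three_halves del: fact_Suc)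
  from arg_cong[OF this, of complex_of_real] show ?thesis
    by (simp del: fact_Suc)
qed

lemma eval_pi_struve_L0_fps: "eval_fps pi_struve_L0_fps y = of_real pi * struveL0 y"
proof -
  define t where "t k = (y / 2) ^ (2 * k + 1) /
      (complex_of_real (Gamma (real k + 3 / 2)) * complex_of_real (Gamma (real k + 3 / 2)))" for k
  have "fps_nth pi_struve_L0_fps (2 * k + 1) * y ^ (2 * k + 1) = of_real pi * t k" for k
    unfolding t_def Gamma_nat_plus_three_halves_mult
    by (simp add: pi_struve_L0_fps_def power_divide field_simps power2_eq_square del: fact_Suc)
  moreover have "(\<lambda>k. fps_nth pi_struve_L0_fps (2 * k + 1) * y ^ (2 * k + 1))
      sums eval_fps pi_struve_L0_fps y"
    using fps_conv_radius_pi_struve_L0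
    by (intro sums_eval_fps_reindex)
      (auto simp: strict_mono_def pi_struve_L0_fps_def range_Suc_double)
  ultimately have "(\<lambda>k. of_real pi * t k / of_real pi) sums (eval_fps pi_struve_L0_fps y / of_real pi)"
    by (intro sums_divide) simp
  then show ?thesis by (simp add: struveL0_def t_def [abs_def] sums_iff)
qed

lemma eval_pi_struve_L1_fps: "eval_fps pi_struve_L1_fps y = of_real pi * struveL1 y"
proof -
  define t where "t k = (y / 2) ^ (2 * k + 2) /
      (complex_of_real (Gamma (real k + 3 / 2)) * complex_of_real (Gamma (real k + 5 / 2)))" for k
  have five_halves: "real k + 5 / 2 = real (Suc k) + 3 / 2" for k by simp
  have "fps_nth pi_struve_L1_fps (2 * k + 2) * y ^ (2 * k + 2) = of_real pi * t k" for k
    unfolding t_def five_halves Gamma_nat_plus_three_halves_mult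
    by (simp add: pi_struve_L1_fps_def power_divide field_simps power_mult del: fact_Suc)
      (simp add: four_power_complex power2_eq_square numeral_eq_Suc)
  moreover have "(\<lambda>k. fps_nth pi_struve_L1_fps (2 * k + 2) * y ^ (2 * k + 2))
      sums eval_fps pi_struve_L1_fps y"
    using fps_conv_radius_pi_struve_L1
    by (intro sums_eval_fps_reindex)
      (auto simp: strict_mono_def pi_struve_L1_fps_def range_Suc_Suc_double)
  ultimately have "(\<lambda>k. of_real pi * t k / of_real pi) sums (eval_fps pi_struve_L1_fps y / of_real pi)"
    by (intro sums_divide) simp
  then show ?thesis by (simp add: struveL1_def t_def [abs_def] sums_iff)
qed


section \<open>Weighted sums of exponential remainders\<close>

lemma sum_times_remainders:
  fixes c t :: "nat \<Rightarrow> 'a :: comm_ring"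
  shows "(\<Sum>n<N. c n * (e - (\<Sum>k\<le>n. t k)))
    = (\<Sum>n<N. c n) * (e - (\<Sum>k<N. t k)) + (\<Sum>k<N. (\<Sum>n<k. c n) * t k)"
  by (induction N) (simp_all add: lessThan_Suc_atMost[symmetric] algebra_simps)

lemma suminf_tail_tendsto_zero:
  fixes f :: "nat \<Rightarrow> 'a :: real_normed_vector"
  assumes "summable f"
  shows "(\<lambda>N. \<Sum>j. f (j + N)) \<longlonglongrightarrow> 0"
proof -
  have "(\<lambda>N. suminf f - (\<Sum>j<N. f j)) \<longlonglongrightarrow> suminf f - suminf f"
    by (intro tendsto_diff tendsto_const summable_LIMSEQ assms)
  then show ?thesis by (simp add: suminf_minus_initial_segment[OF assms])
qed

lemma norm_exp_minus_partial_sum_le: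
  fixes y :: complex
  shows "norm (exp y - (\<Sum>k<N. y ^ k / fact k)) \<le> (\<Sum>j. norm y ^ (j + N) / fact (j + N))"
proof -
  have "(\<lambda>k. y ^ k / fact k) sums exp y"
    using exp_converges[of y] by (simp add: scaleR_conv_of_real divide_inverse mult.commute)
  then have "(\<lambda>j. y ^ (j + N) / fact (j + N)) sums (exp y - (\<Sum>k<N. y ^ k / fact k))"
    by (rule sums_split_initial_segment)
  then have "exp y - (\<Sum>k<N. y ^ k / fact k) = (\<Sum>j. y ^ (j + N) / fact (j + N))"
    by (simp only: sums_iff)
  moreover have "summable (\<lambda>j. norm (y ^ (j + N) / fact (j + N)))"
    using summable_ignore_initial_segment[OF summable_exp[of "norm y"], of N]
    by (simp add: norm_mult norm_power norm_inverse divide_inverse mult.commute)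
  ultimately show ?thesis
    using summable_norm[of "\<lambda>j. y ^ (j + N) / fact (j + N)"] by (simp add: norm_divide norm_power)
qed

lemma norm_mult_exp_remainder_le:
  fixes a y :: complex
  assumes "norm a \<le> B ^ N" "1 \<le> B"
  shows "norm (a * (exp y - (\<Sum>k<N. y ^ k / fact k))) \<le> (\<Sum>j. (B * norm y) ^ (j + N) / fact (j + N))"
proof -
  have summable: "summable (\<lambda>j. x ^ (j + N) / fact (j + N))" for x :: real
    using summable_ignore_initial_segment[OF summable_exp[of x], of N]
    by (simp add: divide_inverse mult.commute)
  have "norm (a * (exp y - (\<Sum>k<N. y ^ k / fact k))) \<le> B ^ N * (\<Sum>j. norm y ^ (j + N) / fact (j + N))"
    unfolding norm_mult using assms by (intro mult_mono norm_exp_minus_partial_sum_le) simp_all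
  also have "\<dots> = (\<Sum>j. B ^ N * (norm y ^ (j + N) / fact (j + N)))"
    using summable by (intro suminf_mult[symmetric])
  also have "\<dots> \<le> (\<Sum>j. (B * norm y) ^ (j + N) / fact (j + N))"
  proof (intro suminf_le allI)
    fix j
    have "B ^ N \<le> B ^ (j + N)" using \<open>1 \<le> B\<close> by (intro power_increasing) simp_all
    then show "B ^ N * (norm y ^ (j + N) / fact (j + N)) \<le> (B * norm y) ^ (j + N) / fact (j + N)"
      unfolding power_mult_distrib by (simp add: mult_right_mono divide_right_mono)
  qed (use summable summable_mult[OF summable[of "norm y"], of "B ^ N"] in simp_all)
  finally show ?thesis .
qed

lemma sums_times_expRem:
  fixes c :: "nat \<Rightarrow> complex" and B :: real
  assumes bound: "\<And>N. norm (\<Sum>n<N. c n) \<le> B ^ N" and "1 \<le> B"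
    and sums: "(\<lambda>k. (\<Sum>n<k. c n) * (y ^ k / fact k)) sums s"
  shows "(\<lambda>n. c n * expRem n y) sums s"
proof -
  have "summable (\<lambda>k. (B * norm y) ^ k / fact k)"
    using summable_exp[of "B * norm y"] by (simp add: divide_inverse mult.commute)
  then have "(\<lambda>N. (\<Sum>n<N. c n) * (exp y - (\<Sum>k<N. y ^ k / fact k))) \<longlonglongrightarrow> 0"
    by (rule Lim_null_comparison[OF always_eventually[OF allI[OF
          norm_mult_exp_remainder_le[OF bound \<open>1 \<le> B\<close>]]] suminf_tail_tendsto_zero])
  then have "(\<lambda>N. (\<Sum>n<N. c n) * (exp y - (\<Sum>k<N. y ^ k / fact k))
        + (\<Sum>k<N. (\<Sum>n<k. c n) * (y ^ k / fact k))) \<longlonglongrightarrow> 0 + s"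
    using sums unfolding sums_def by (rule tendsto_add)
  moreover have "(\<Sum>n<N. c n * expRem n y) = (\<Sum>n<N. c n) * (exp y - (\<Sum>k<N. y ^ k / fact k))
      + (\<Sum>k<N. (\<Sum>n<k. c n) * (y ^ k / fact k))" for N
    unfolding expRem_def of_nat_fact by (rule sum_times_remainders)
  ultimately show ?thesis
    unfolding sums_def by (simp only: add_0_left)
qed


lemma norm_sum_catalan_div_two_power_le: "norm (\<Sum>n<N. of_nat (catalan n) / 2 ^ n :: complex) \<le> 2 ^ N"
proof -
  have "norm (of_nat (catalan n) / 2 ^ n :: complex) \<le> 2 ^ n" for n
  proof -
    have "real (catalan n) \<le> 2 ^ n * 2 ^ n"
      using of_nat_mono[OF catalan_le_four_power[of n], where 'a = real]
      by (simp add: power_mult_distrib[symmetric])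
    then show ?thesis by (simp add: norm_divide norm_power divide_le_eq)
  qed
  then have "norm (\<Sum>n<N. of_nat (catalan n) / 2 ^ n :: complex) \<le> (\<Sum>n<N. 2 ^ n)"
    by (intro order_trans[OF norm_sum] sum_mono)
  also have "(\<Sum>n<N. 2 ^ n :: real) \<le> 2 ^ N"
    by (induction N) simp_all
  finally show ?thesis .
qed

lemma sums_eval_catalan_partial_egf:
  "(\<lambda>k. (\<Sum>n<k. of_nat (catalan n) / 2 ^ n) * (y ^ k / fact k)) sums eval_fps catalan_partial_egf y"
proof -
  have "fps_conv_radius catalan_partial_egf = \<infinity>"
    by (simp add: catalan_partial_egf_eq)
  then show ?thesis
    using sums_eval_fps[of y catalan_partial_egf] by (simp add: catalan_partial_egf_def)
qed

lemma eval_catalan_partial_egf: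
  "eval_fps catalan_partial_egf y = exp y * (1 - besselI0 y + eval_fps bessel_I0_integral_fps y)"
  by (simp add: catalan_partial_egf_eq eval_fps_mult eval_fps_add eval_fps_diff eval_bessel_I0_fps)

lemma eval_bessel_I0_integral_fps:
  "eval_fps bessel_I0_integral_fps y
     = y * besselI0 y + of_real pi * y / 2 * (besselI0 y * struveL1 y - besselI1 y * struveL0 y)"
  by (subst bessel_I0_integral_eq_struve)
    (simp add: eval_fps_mult eval_fps_add eval_fps_diff eval_bessel_I0_fps eval_bessel_I1_fps
      eval_pi_struve_L0_fps eval_pi_struve_L1_fps algebra_simps)

theorem mainTheorem15:
  fixes y :: complex
  shows "summable (\<lambda>n. y ^ (2 * n + 1) / (4 ^ n * (of_nat (fact n))\<^sup>2 * of_nat (2 * n + 1)))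
    \<and> (\<lambda>n. of_nat (catalan n) / 2 ^ n * expRem n y) sums
        (exp y * (1 - besselI0 y +
           (\<Sum>n. y ^ (2 * n + 1) / (4 ^ n * (of_nat (fact n))\<^sup>2 * of_nat (2 * n + 1)))))
    \<and> exp y * (1 - besselI0 y +
           (\<Sum>n. y ^ (2 * n + 1) / (4 ^ n * (of_nat (fact n))\<^sup>2 * of_nat (2 * n + 1))))
      = exp y * (1 + (y - 1) * besselI0 y +
           of_real pi * y / 2 * (besselI0 y * struveL1 y - besselI1 y * struveL0 y))"
proof -
  have S: "(\<lambda>n. y ^ (2 * n + 1) / (4 ^ n * (of_nat (fact n))\<^sup>2 * of_nat (2 * n + 1)))
      sums eval_fps bessel_I0_integral_fps y"
    by (rule sums_eval_bessel_I0_integral_fps)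
  have sum_eq: "(\<Sum>n. y ^ (2 * n + 1) / (4 ^ n * (of_nat (fact n))\<^sup>2 * of_nat (2 * n + 1)))
      = eval_fps bessel_I0_integral_fps y"
    using S by (rule sums_unique[symmetric])
  have "(\<lambda>n. of_nat (catalan n) / 2 ^ n * expRem n y) sums eval_fps catalan_partial_egf y"
    by (rule sums_times_expRem[OF norm_sum_catalan_div_two_power_le _ sums_eval_catalan_partial_egf]) simp
  then show ?thesis
    using sums_summable[OF S]
    unfolding sum_eq eval_catalan_partial_egf eval_bessel_I0_integral_fps
    by (simp add: algebra_simps)
qed

end
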